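(* Let $p$ be an odd prime and $n,k$ positive integers. Then $\psi'(P^*(p^n,2^k))>\frac{19}{43}$ if and only if either ($p=3$, $n=1$, $k\ge1$) or ($p=5$, $n=1$, $k\le 2$).
   Context: For a finite group $G$, $\psi(G)=\sum_{x\in G} o(x)$ and $\psi'(G)=\psi(G)/\psi(\mathcal{C}_{|G|})$, where $\mathcal{C}_n$ is the cyclic group of order $n$. For an odd prime $p$ and positive integers $n,k$, $P^*(p^n,2^k)=A\rtimes\langle x\rangle$, where $A$ is elementary abelian of order $p^n$, $\langle x\rangle$ is cyclic of order $2^k$, and $x$ acts on $A$ by inversion. *)

theory Defs
  imports "HOL-Algebra.Multiplicative_Group" "HOL-Computational_Algebra.Primes"
begin

definition psi :: "('a, 'b) monoid_scheme \<Rightarrow> nat" where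
  "psi G = (\<Sum>x\<in>carrier G. group.ord G x)"

definition cyclic_grp :: "nat \<Rightarrow> nat monoid" where
  "cyclic_grp m = \<lparr>carrier = {0..<m}, monoid.mult = (\<lambda>x y. (x + y) mod m), one = 0\<rparr>"

definition psi' :: "('a, 'b) monoid_scheme \<Rightarrow> real" where
  "psi' G = real (psi G) / real (psi (cyclic_grp (order G)))"

text \<open>P*(p^n, 2^k) = A \<rtimes> <x>, A = (Z/p)^n elementary abelian (vectors indexed by
  0..n-1 with entries in 0..p-1, zero outside), <x> = Z/2^k, x acting on A by inversion:
  (a, x^i)(b, x^j) = (a + (-1)^i b, x^(i+j)).\<close>
definition Pstar :: "nat \<Rightarrow> nat \<Rightarrow> nat \<Rightarrow> ((nat \<Rightarrow> int) \<times> nat) monoid" where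
  "Pstar p n k = \<lparr>carrier = {(a, i). (\<forall>j<n. 0 \<le> a j \<and> a j < int p) \<and> (\<forall>j\<ge>n. a j = 0) \<and> i < 2 ^ k},
     monoid.mult = (\<lambda>(a, i) (b, j). ((\<lambda>t. (a t + (-1) ^ i * b t) mod int p), (i + j) mod 2 ^ k)),
     one = (\<lambda>_. 0, 0)\<rparr>"

end

theory Submission
  imports Defs "HOL-Number_Theory.Cong"
begin

text \<open>
  An element \<open>(a, x^i)\<close> of \<open>P* = A \<rtimes> \<langle>x\<rangle>\<close> with \<open>i\<close> odd squares to \<open>(0, x^(2i))\<close>, so its
  order is \<open>2^k\<close>; for \<open>i\<close> even it lies in the direct product \<open>A \<times> \<langle>x^2\<rangle>\<close>, so its order is
  that of \<open>x^i\<close>, times \<open>p\<close> unless \<open>a = 0\<close>. Summing over the group gives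
  \<open>\<psi>(P*) = 2^(2k-1) p^n + (1 + (p^n - 1) p) \<psi>(C_{2^(k-1)})\<close>. Since \<open>\<psi>\<close> is multiplicative on
  cyclic groups and \<open>(q + 1) \<psi>(C_{q^e}) = q^(2e+1) + 1\<close>, with \<open>P = p^n\<close> and \<open>X = 2^(2k-1)\<close>
  the ratio is \<open>\<psi>'(P*) = (p + 1)(3PX + (1 + (P - 1) p)(X + 1)) / ((pP^2 + 1)(4X + 1))\<close>,
  and comparing it with \<open>19/43\<close> is a polynomial inequality that holds exactly in the
  listed cases.
\<close>

lemma dvd_mult_iff_div_gcd_dvd:
  fixes m x y :: nat
  assumes "m > 0"
  shows "m dvd y * x \<longleftrightarrow> m div gcd x m dvd y"
  using assms by (simp add: div_dvd_iff_mult gcd_mult_distrib_nat mult.commute gcd.commute)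

lemma div_gcd_mult_coprime:
  fixes a b x :: nat
  assumes "coprime a b" "a > 0" "b > 0"
  shows "a * b div gcd x (a * b) = (a div gcd x a) * (b div gcd x b)"
proof (rule dvd_antisym)
  have cop: "coprime (a div gcd x a) (b div gcd x b)"
    by (rule coprime_divisors [OF _ _ assms(1)]) (metis dvd_div_mult_self gcd_dvd2 dvd_triv_left)+
  have coprime_dvd_iff: "u * v dvd z \<longleftrightarrow> u dvd z \<and> v dvd z" if "coprime u v" for u v z :: nat
    using that by (meson divides_mult dvd_mult_left dvd_mult_right)
  have dvd_iff: "a * b div gcd x (a * b) dvd y \<longleftrightarrow> (a div gcd x a) * (b div gcd x b) dvd y" for y
  proof -
    have "a * b div gcd x (a * b) dvd y \<longleftrightarrow> a * b dvd y * x"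
      using assms by (simp add: dvd_mult_iff_div_gcd_dvd)
    also have "\<dots> \<longleftrightarrow> a div gcd x a dvd y \<and> b div gcd x b dvd y"
      using coprime_dvd_iff [OF assms(1)] dvd_mult_iff_div_gcd_dvd [OF assms(2)]
        dvd_mult_iff_div_gcd_dvd [OF assms(3)] by blast
    also have "\<dots> \<longleftrightarrow> (a div gcd x a) * (b div gcd x b) dvd y"
      using cop by (simp add: coprime_dvd_iff)
    finally show ?thesis .
  qed
  show "a * b div gcd x (a * b) dvd (a div gcd x a) * (b div gcd x b)"
    using dvd_iff [of "(a div gcd x a) * (b div gcd x b)"] by simp
  show "(a div gcd x a) * (b div gcd x b) dvd a * b div gcd x (a * b)"
    using dvd_iff [of "a * b div gcd x (a * b)"] by simp
qed

lemma minus_one_power_mod_even: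
  assumes "even m"
  shows "(-1::'a::ring_1) ^ (x mod m) = (-1) ^ x"
  by (metis assms dvd_mod dvd_mod_imp_dvd minus_one_power_iff)

lemma sum_lessThan_double:
  fixes N :: nat
  shows "(\<Sum>i<2 * N. h i) = (\<Sum>j<N. h (2 * j) + h (2 * j + 1))"
  by (induction N) (simp_all add: lessThan_Suc add_ac)

lemma group_cyclic_grp:
  assumes "m > 0"
  shows "group (cyclic_grp m)"
proof (rule groupI)
  fix x assume "x \<in> carrier (cyclic_grp m)"
  then show "\<exists>y \<in> carrier (cyclic_grp m). y \<otimes>\<^bsub>cyclic_grp m\<^esub> x = \<one>\<^bsub>cyclic_grp m\<^esub>"
    using assms by (intro bexI [where x = "(m - x) mod m"]) (auto simp: cyclic_grp_def mod_add_left_eq)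
qed (use assms in \<open>auto simp: cyclic_grp_def mod_add_left_eq mod_add_right_eq add.assoc\<close>)

lemma cyclic_grp_pow: "x [^]\<^bsub>cyclic_grp m\<^esub> (y::nat) = y * x mod m"
  by (induction y) (simp_all add: cyclic_grp_def mod_add_right_eq add.commute)

lemma ord_cyclic_grp:
  assumes "m > 0" "x < m"
  shows "group.ord (cyclic_grp m) x = m div gcd x m"
proof -
  interpret group "cyclic_grp m" using assms(1) by (rule group_cyclic_grp)
  have x: "x \<in> carrier (cyclic_grp m)" using assms(2) by (simp add: cyclic_grp_def)
  have "x [^]\<^bsub>cyclic_grp m\<^esub> y = \<one>\<^bsub>cyclic_grp m\<^esub> \<longleftrightarrow> m div gcd x m dvd y" for y :: nat
    unfolding cyclic_grp_pow using assms(1)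
    by (simp add: cyclic_grp_def dvd_eq_mod_eq_0 [symmetric] dvd_mult_iff_div_gcd_dvd)
  then show ?thesis using ord_unique [OF x] by blast
qed

lemma psi_cyclic_grp: "psi (cyclic_grp m) = (\<Sum>x<m. m div gcd x m)"
proof (cases "m = 0")
  case False
  then show ?thesis
    unfolding psi_def by (intro sum.cong) (auto simp: ord_cyclic_grp, simp_all add: cyclic_grp_def)
qed (simp add: psi_def cyclic_grp_def)

lemma psi_cyclic_grp_mult:
  fixes a b :: nat
  assumes "coprime a b" "a > 0" "b > 0"
  shows "psi (cyclic_grp (a * b)) = psi (cyclic_grp a) * psi (cyclic_grp b)"
proof -
  let ?crt = "\<lambda>x. (x mod a, x mod b)"
  have "inj_on ?crt {..<a * b}"
  proof (rule inj_onI)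
    fix x y assume xy: "x \<in> {..<a * b}" "y \<in> {..<a * b}" and "?crt x = ?crt y"
    then have "[x = y] (mod a * b)"
      using coprime_cong_mult_nat [of x y a b] assms(1) by (simp add: cong_def)
    then show "x = y" using xy cong_less_modulus_unique_nat by blast
  qed
  moreover have "?crt ` {..<a * b} \<subseteq> {..<a} \<times> {..<b}"
    using assms by auto
  ultimately have "bij_betw ?crt {..<a * b} ({..<a} \<times> {..<b})"
    by (simp add: bij_betw_def card_subset_eq card_image card_cartesian_product)
  then have "(\<Sum>x<a * b. a div gcd (x mod a) a * (b div gcd (x mod b) b))
      = (\<Sum>(u, v)\<in>{..<a} \<times> {..<b}. a div gcd u a * (b div gcd v b))"
    using sum.reindex_bij_betw [of ?crt _ _ "\<lambda>(u, v). a div gcd u a * (b div gcd v b)"] by simp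
  then show ?thesis
    using assms by (simp add: psi_cyclic_grp div_gcd_mult_coprime gcd_mod_left sum_product
        sum.cartesian_product)
qed

text \<open>Among the residues modulo \<open>q^(e+1)\<close>, the multiples of \<open>q\<close> contribute
  \<open>psi (cyclic_grp (q^e))\<close> and each of the \<open>q^(e+1) - q^e\<close> others has order \<open>q^(e+1)\<close>.\<close>
lemma psi_cyclic_grp_prime_power_Suc:
  assumes "prime q"
  shows "psi (cyclic_grp (q ^ Suc e)) + q ^ (2 * e + 1) = psi (cyclic_grp (q ^ e)) + q ^ (2 * e + 2)"
proof -
  have q0: "q > 0" using assms prime_gt_0_nat by blast
  let ?ord = "\<lambda>x. q ^ Suc e div gcd x (q ^ Suc e)"
  define M where "M = (\<lambda>y. q * y) ` {..<q ^ e}"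
  have M_sub: "M \<subseteq> {..<q ^ Suc e}" unfolding M_def using q0 by auto
  have inj: "inj_on (\<lambda>y. q * y) {..<q ^ e}" using q0 by (auto simp: inj_on_def)
  have card_M: "card M = q ^ e" unfolding M_def using card_image [OF inj] by simp
  have "sum ?ord M = (\<Sum>y<q ^ e. q ^ Suc e div gcd (q * y) (q ^ Suc e))"
    unfolding M_def by (simp add: sum.reindex [OF inj])
  also have "\<dots> = psi (cyclic_grp (q ^ e))"
    using q0 by (simp add: psi_cyclic_grp gcd_mult_distrib_nat [symmetric])
  finally have sum_M: "sum ?ord M = psi (cyclic_grp (q ^ e))" .
  have "coprime x (q ^ Suc e)" if "x \<in> {..<q ^ Suc e} - M" for x
  proof -
    have "\<not> q dvd x" using that unfolding M_def by auto
    then show ?thesis using assms by (simp add: prime_imp_coprime coprime_commute)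
  qed
  then have sum_rest: "sum ?ord ({..<q ^ Suc e} - M) = (q ^ Suc e - q ^ e) * q ^ Suc e"
    using M_sub card_M by (simp add: card_Diff_subset finite_subset)
  have "psi (cyclic_grp (q ^ Suc e)) = sum ?ord M + sum ?ord ({..<q ^ Suc e} - M)"
    unfolding psi_cyclic_grp using M_sub by (simp add: sum.subset_diff [of M])
  also have "\<dots> = psi (cyclic_grp (q ^ e)) + (q ^ Suc e - q ^ e) * q ^ Suc e"
    using sum_M sum_rest by simp
  finally have psi_Suc: "psi (cyclic_grp (q ^ Suc e))
      = psi (cyclic_grp (q ^ e)) + (q ^ Suc e - q ^ e) * q ^ Suc e" .
  have "(q ^ Suc e - q ^ e) * q ^ Suc e + q ^ (2 * e + 1) = q ^ (2 * e + 2)"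
  proof -
    have "q ^ e \<le> q ^ Suc e" using q0 by simp
    moreover have "q ^ (2 * e + 1) = q ^ e * q ^ Suc e" "q ^ (2 * e + 2) = q ^ Suc e * q ^ Suc e"
      by (simp_all add: power_add [symmetric] mult_2)
    ultimately show ?thesis by (metis add_mult_distrib le_add_diff_inverse2)
  qed
  then show ?thesis using psi_Suc by simp
qed

lemma psi_cyclic_grp_prime_power:
  assumes "prime q"
  shows "(q + 1) * psi (cyclic_grp (q ^ e)) = q ^ (2 * e + 1) + 1"
proof (induction e)
  case 0
  show ?case by (simp add: psi_cyclic_grp)
next
  case (Suc e)
  from psi_cyclic_grp_prime_power_Suc [OF assms, of e]
  have "(q + 1) * psi (cyclic_grp (q ^ Suc e)) + (q + 1) * q ^ (2 * e + 1)
      = (q + 1) * psi (cyclic_grp (q ^ e)) + (q + 1) * q ^ (2 * e + 2)"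
    by (metis distrib_left)
  with Suc.IH show ?case by (simp add: algebra_simps)
qed

definition residue_vectors :: "nat \<Rightarrow> nat \<Rightarrow> (nat \<Rightarrow> int) set" where
  "residue_vectors p n = {a. (\<forall>j<n. 0 \<le> a j \<and> a j < int p) \<and> (\<forall>j\<ge>n. a j = 0)}"

lemma residue_vectors_mod [simp]: "a \<in> residue_vectors p n \<Longrightarrow> a t mod int p = a t"
  unfolding residue_vectors_def by (cases "t < n") auto

lemma bij_betw_restrict_residue_vectors:
  "bij_betw (\<lambda>a. restrict a {..<n}) (residue_vectors p n) (PiE {..<n} (\<lambda>_. {0..<int p}))"
  by (rule bij_betwI [where g = "\<lambda>f j. if j < n then f j else 0"])
    (auto simp: residue_vectors_def PiE_def extensional_def fun_eq_iff)

lemma finite_residue_vectors: "finite (residue_vectors p n)"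
  using bij_betw_finite [OF bij_betw_restrict_residue_vectors] by (simp add: finite_PiE)

lemma card_residue_vectors: "card (residue_vectors p n) = p ^ n"
  using bij_betw_same_card [OF bij_betw_restrict_residue_vectors] by (simp add: card_PiE)

lemma carrier_Pstar: "carrier (Pstar p n k) = residue_vectors p n \<times> {..<2 ^ k}"
  unfolding Pstar_def residue_vectors_def by auto

lemma mult_Pstar:
  "(a, i) \<otimes>\<^bsub>Pstar p n k\<^esub> (b, j) = (\<lambda>t. (a t + (-1) ^ i * b t) mod int p, (i + j) mod 2 ^ k)"
  by (simp add: Pstar_def)

lemma one_Pstar: "\<one>\<^bsub>Pstar p n k\<^esub> = (\<lambda>_. 0, 0)"
  by (simp add: Pstar_def)

lemma order_Pstar: "order (Pstar p n k) = p ^ n * 2 ^ k"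
  by (simp add: order_def carrier_Pstar card_cartesian_product card_residue_vectors)

lemma group_Pstar:
  assumes "p > 0" "k \<ge> 1"
  shows "group (Pstar p n k)"
proof (rule groupI)
  have sign: "(-1::int) ^ ((i + j) mod 2 ^ k) = (-1) ^ i * (-1) ^ j" for i j
    using assms(2) by (simp add: minus_one_power_mod_even power_add)
  fix x y z assume "x \<in> carrier (Pstar p n k)" "y \<in> carrier (Pstar p n k)" "z \<in> carrier (Pstar p n k)"
  obtain a i b j c l where xyz: "x = (a, i)" "y = (b, j)" "z = (c, l)"
    by (metis surj_pair)
  have mod_inner: "(u + s * (v mod int p)) mod int p = (u + s * v) mod int p" for u s v :: int
    by (metis mod_add_right_eq mod_mult_right_eq)
  show "x \<otimes>\<^bsub>Pstar p n k\<^esub> y \<otimes>\<^bsub>Pstar p n k\<^esub> z = x \<otimes>\<^bsub>Pstar p n k\<^esub> (y \<otimes>\<^bsub>Pstar p n k\<^esub> z)"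
    unfolding xyz mult_Pstar sign
    by (simp add: fun_eq_iff mod_add_left_eq mod_add_right_eq mod_inner add.assoc) (simp add: algebra_simps)
next
  fix x y assume "x \<in> carrier (Pstar p n k)" "y \<in> carrier (Pstar p n k)"
  then show "x \<otimes>\<^bsub>Pstar p n k\<^esub> y \<in> carrier (Pstar p n k)"
    using assms(1) by (auto simp: carrier_Pstar mult_Pstar residue_vectors_def)
next
  show "\<one>\<^bsub>Pstar p n k\<^esub> \<in> carrier (Pstar p n k)"
    using assms(1) by (simp add: carrier_Pstar one_Pstar residue_vectors_def)
next
  fix x assume "x \<in> carrier (Pstar p n k)"
  then obtain a i where x: "x = (a, i)" "a \<in> residue_vectors p n" "i < 2 ^ k"
    by (auto simp: carrier_Pstar)
  then show "\<one>\<^bsub>Pstar p n k\<^esub> \<otimes>\<^bsub>Pstar p n k\<^esub> x = x"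
    by (simp add: one_Pstar mult_Pstar)
  define j where "j = (2 ^ k - i) mod 2 ^ k"
  define b where "b = (\<lambda>t. - ((-1) ^ j * a t) mod int p)"
  have "(b, j) \<in> carrier (Pstar p n k)"
    using x(2) assms(1) by (auto simp: carrier_Pstar residue_vectors_def b_def j_def)
  moreover have "(b, j) \<otimes>\<^bsub>Pstar p n k\<^esub> x = \<one>\<^bsub>Pstar p n k\<^esub>"
    using x(3) by (simp add: x(1) b_def j_def one_Pstar mult_Pstar fun_eq_iff mod_add_left_eq)
  ultimately show "\<exists>y \<in> carrier (Pstar p n k). y \<otimes>\<^bsub>Pstar p n k\<^esub> x = \<one>\<^bsub>Pstar p n k\<^esub>"
    by blast
qed

lemma pow_Pstar_even:
  assumes "k \<ge> 1" "even i"
  shows "(a, i) [^]\<^bsub>Pstar p n k\<^esub> (m::nat) = (\<lambda>t. int m * a t mod int p, m * i mod 2 ^ k)"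
proof (induction m)
  case (Suc m)
  have "(-1::int) ^ (m * i mod 2 ^ k) = 1"
    using assms by (simp add: minus_one_power_mod_even)
  then show ?case
    by (simp add: Suc mult_Pstar fun_eq_iff mod_add_left_eq mod_add_right_eq algebra_simps)
qed (simp add: one_Pstar)

lemma pow_Pstar_odd:
  assumes "k \<ge> 1" "odd i" "a \<in> residue_vectors p n"
  shows "(a, i) [^]\<^bsub>Pstar p n k\<^esub> (m::nat) = (if even m then (\<lambda>_. 0) else a, m * i mod 2 ^ k)"
proof (induction m)
  case (Suc m)
  have "(-1::int) ^ (m * i mod 2 ^ k) = (-1) ^ (m * i)"
    using assms(1) by (simp add: minus_one_power_mod_even)
  also have "\<dots> = (-1) ^ m"
    using assms(2) by (simp add: minus_one_power_iff)
  finally have "(-1::int) ^ (m * i mod 2 ^ k) = (-1) ^ m" .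
  then show ?case
    using assms(2,3) by (simp add: Suc mult_Pstar mod_add_left_eq mod_add_right_eq add.commute)
qed (simp add: one_Pstar)

lemma residue_vector_scale_eq_zero_iff:
  assumes "prime p" "a \<in> residue_vectors p n"
  shows "(\<forall>t. int m * a t mod int p = 0) \<longleftrightarrow> a = (\<lambda>_. 0) \<or> p dvd m"
proof
  assume scale: "\<forall>t. int m * a t mod int p = 0"
  show "a = (\<lambda>_. 0) \<or> p dvd m"
  proof (cases "a = (\<lambda>_. 0)")
    case False
    then obtain t where "a t \<noteq> 0" by auto
    with assms(2) have "\<not> int p dvd a t"
      by (metis residue_vectors_mod dvd_imp_mod_0)
    moreover have "int p dvd int m * a t" using scale by (simp add: dvd_eq_mod_eq_0)
    ultimately show ?thesis
      using assms(1) by (simp add: prime_dvd_mult_iff)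
  qed simp
qed (auto simp: dvd_eq_mod_eq_0 [symmetric])

lemma ord_Pstar:
  assumes p: "prime p" "odd p" and k: "k \<ge> 1"
    and a: "a \<in> residue_vectors p n" and i: "i < 2 ^ k"
  shows "group.ord (Pstar p n k) (a, i) =
    (if odd i then 2 ^ k else (if a = (\<lambda>_. 0) then 1 else p) * (2 ^ k div gcd i (2 ^ k)))"
    (is "_ = ?d")
proof -
  interpret group "Pstar p n k"
    using p k by (intro group_Pstar) (simp_all add: prime_gt_0_nat)
  have x: "(a, i) \<in> carrier (Pstar p n k)"
    using a i by (simp add: carrier_Pstar)
  have pow_i: "m * i mod 2 ^ k = 0 \<longleftrightarrow> 2 ^ k div gcd i (2 ^ k) dvd m" for m :: nat
    by (simp add: dvd_eq_mod_eq_0 [symmetric] dvd_mult_iff_div_gcd_dvd)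
  have "(a, i) [^]\<^bsub>Pstar p n k\<^esub> m = \<one>\<^bsub>Pstar p n k\<^esub> \<longleftrightarrow> ?d dvd m" for m :: nat
  proof (cases "odd i")
    case True
    then have mi: "m * i mod 2 ^ k = 0 \<longleftrightarrow> 2 ^ k dvd m"
      by (simp add: dvd_eq_mod_eq_0 [symmetric] coprime_dvd_mult_left_iff)
    have "(2::nat) dvd 2 ^ k"
      using k by (simp add: dvd_power)
    then have "2 ^ k dvd m \<Longrightarrow> even m"
      using dvd_trans by blast
    moreover have "(a, i) [^]\<^bsub>Pstar p n k\<^esub> m = \<one>\<^bsub>Pstar p n k\<^esub> \<longleftrightarrow>
        (if even m then (\<lambda>_. 0) else a) = (\<lambda>_. 0) \<and> m * i mod 2 ^ k = 0"
      by (simp add: pow_Pstar_odd [OF k True a] one_Pstar)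
    ultimately show ?thesis
      using True unfolding mi by (cases "even m"; simp; blast)
  next
    case False
    have "coprime p (2 ^ k)"
      using p by (simp add: prime_imp_coprime)
    moreover have "2 ^ k div gcd i (2 ^ k) dvd 2 ^ k"
      by (metis dvd_div_mult_self gcd_dvd2 dvd_triv_left)
    ultimately have "coprime p (2 ^ k div gcd i (2 ^ k))"
      using coprime_divisors dvd_refl by blast
    then have "p dvd m \<and> 2 ^ k div gcd i (2 ^ k) dvd m \<longleftrightarrow> p * (2 ^ k div gcd i (2 ^ k)) dvd m"
      by (meson divides_mult dvd_mult_left dvd_mult_right)
    moreover have "(a, i) [^]\<^bsub>Pstar p n k\<^esub> m = \<one>\<^bsub>Pstar p n k\<^esub> \<longleftrightarrow>
        (\<forall>t. int m * a t mod int p = 0) \<and> m * i mod 2 ^ k = 0"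
      using False by (simp add: pow_Pstar_even [OF k] one_Pstar fun_eq_iff)
    ultimately show ?thesis
      using False pow_i residue_vector_scale_eq_zero_iff [OF p(1) a, of m] by auto
  qed
  then show ?thesis using ord_unique [OF x] by blast
qed

lemma psi_Pstar:
  assumes p: "prime p" "odd p"
  shows "psi (Pstar p n (Suc k)) =
    2 ^ k * 2 ^ Suc k * p ^ n + (1 + (p ^ n - 1) * p) * psi (cyclic_grp (2 ^ k))"
proof -
  define K where "K = (2::nat) ^ Suc k"
  define c where "c = 1 + (p ^ n - 1) * p"
  let ?V = "residue_vectors p n"
  let ?ord = "group.ord (Pstar p n (Suc k))"
  let ?col = "\<lambda>i. if odd i then p ^ n * K else c * (K div gcd i K)"
  have zero: "(\<lambda>_. 0) \<in> ?V"
    using prime_gt_0_nat [OF p(1)] by (simp add: residue_vectors_def)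
  have col: "(\<Sum>a\<in>?V. ?ord (a, i)) = ?col i" if "i < K" for i
  proof (cases "odd i")
    case True
    then show ?thesis
      using that p by (simp add: ord_Pstar K_def card_residue_vectors)
  next
    case False
    let ?d = "K div gcd i K"
    have "(\<Sum>a\<in>?V. ?ord (a, i)) = (\<Sum>a\<in>?V. (if a = (\<lambda>_. 0) then 1 else p) * ?d)"
      using that p False by (intro sum.cong) (simp_all add: ord_Pstar K_def)
    also have "\<dots> = ?d + (\<Sum>a\<in>?V - {\<lambda>_. 0}. p * ?d)"
      using zero by (simp add: sum.remove [OF finite_residue_vectors])
    also have "\<dots> = c * ?d"
      using zero by (simp add: c_def card_residue_vectors algebra_simps)
    finally show ?thesis using False by simp
  qed
  have "psi (Pstar p n (Suc k)) = (\<Sum>a\<in>?V. \<Sum>i<K. ?ord (a, i))"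
    unfolding psi_def carrier_Pstar K_def by (rule sum.cartesian_product')
  also have "\<dots> = (\<Sum>i<K. \<Sum>a\<in>?V. ?ord (a, i))"
    by (rule sum.swap)
  also have "\<dots> = (\<Sum>i<K. ?col i)"
    using col by simp
  also have "\<dots> = (\<Sum>j<2 ^ k. c * (2 ^ k div gcd j (2 ^ k)) + p ^ n * K)"
    unfolding K_def power_Suc sum_lessThan_double
    by (intro sum.cong) (simp_all add: gcd_mult_distrib_nat [symmetric])
  also have "\<dots> = 2 ^ k * 2 ^ Suc k * p ^ n + c * psi (cyclic_grp (2 ^ k))"
    by (simp add: psi_cyclic_grp sum.distrib sum_distrib_left K_def)
  finally show ?thesis unfolding c_def .
qed

lemma psi_cyclic_order_Pstar:
  assumes "prime p" "odd p"
  shows "3 * (p + 1) * psi (cyclic_grp (order (Pstar p n (Suc k))))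
    = (p * p ^ n * p ^ n + 1) * (4 * 2 ^ (2 * k + 1) + 1)"
proof -
  have "coprime (p ^ n) (2 ^ Suc k)"
    using assms by (simp add: prime_imp_coprime)
  then have "psi (cyclic_grp (order (Pstar p n (Suc k))))
      = psi (cyclic_grp (p ^ n)) * psi (cyclic_grp (2 ^ Suc k))"
    using prime_gt_0_nat [OF assms(1)] by (simp add: order_Pstar psi_cyclic_grp_mult)
  moreover have "(p + 1) * psi (cyclic_grp (p ^ n)) = p * p ^ n * p ^ n + 1"
    using psi_cyclic_grp_prime_power [OF assms(1), of n] by (simp add: power_add mult_2)
  moreover have "3 * psi (cyclic_grp (2 ^ Suc k)) = 4 * 2 ^ (2 * k + 1) + 1"
    using psi_cyclic_grp_prime_power [OF two_is_prime_nat, of "Suc k"] by (simp add: power_add)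
  ultimately show ?thesis
    by (metis mult.assoc mult.left_commute)
qed

lemma psi_Pstar_closed_form:
  assumes "prime p" "odd p"
  shows "3 * psi (Pstar p n (Suc k))
    = 3 * p ^ n * 2 ^ (2 * k + 1) + (1 + (p ^ n - 1) * p) * (2 ^ (2 * k + 1) + 1)"
proof -
  have "3 * psi (Pstar p n (Suc k))
      = 3 * (2 ^ k * 2 ^ Suc k) * p ^ n + (1 + (p ^ n - 1) * p) * (3 * psi (cyclic_grp (2 ^ k)))"
    by (simp add: psi_Pstar [OF assms] distrib_left mult_ac)
  moreover have "2 ^ k * 2 ^ Suc k = (2::nat) ^ (2 * k + 1)"
    by (simp add: power_add [symmetric])
  moreover have "3 * psi (cyclic_grp (2 ^ k)) = 2 ^ (2 * k + 1) + 1"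
    using psi_cyclic_grp_prime_power [OF two_is_prime_nat, of k] by simp
  ultimately show ?thesis by (simp add: mult_ac)
qed

lemma threshold_inequality_fails:
  fixes p P X :: nat
  assumes "X \<ge> 2"
    and "p = 3 \<and> P \<ge> 9 \<or> p = 5 \<and> P \<ge> 25 \<or> p = 5 \<and> P = 5 \<and> X \<ge> 32 \<or> p \<ge> 7 \<and> P \<ge> p"
  shows "43 * ((p + 1) * (3 * P * X + (1 + (P - 1) * p) * (X + 1)))
    \<le> 19 * ((p * P * P + 1) * (4 * X + 1))"
proof -
  txt \<open>After shifting every variable to its lower bound, all coefficients of the difference
    are nonnegative, so each case is closed by normalisation.\<close>
  obtain c where X: "X = 2 + c" using assms(1) le_Suc_ex by blast
  from assms(2) show ?thesis
  proof (elim disjE conjE)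
    assume "p = 3" "P \<ge> 9"
    then obtain b where "P = 9 + b" using le_Suc_ex by blast
    then show ?thesis using \<open>p = 3\<close> X by (simp add: algebra_simps)
  next
    assume "p = 5" "P \<ge> 25"
    then obtain b where "P = 25 + b" using le_Suc_ex by blast
    then show ?thesis using \<open>p = 5\<close> X by (simp add: algebra_simps)
  next
    assume "p = 5" "P = 5" "X \<ge> 32"
    then obtain d where "X = 32 + d" using le_Suc_ex by blast
    then show ?thesis using \<open>p = 5\<close> \<open>P = 5\<close> by (simp add: algebra_simps)
  next
    assume "p \<ge> 7" "P \<ge> p"
    then obtain a b where "p = 7 + a" "P = 7 + a + b" using le_Suc_ex by (metis add.assoc)
    then show ?thesis using X by (simp add: algebra_simps)
  qed
qed

lemma threshold_inequality_iff:
  fixes p n k P X :: nat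
  assumes p: "prime p" "odd p" and n: "n \<ge> 1" and P: "P = p ^ n" and X: "X = 2 ^ (2 * k + 1)"
  shows "19 * ((p * P * P + 1) * (4 * X + 1))
      < 43 * ((p + 1) * (3 * P * X + (1 + (P - 1) * p) * (X + 1)))
    \<longleftrightarrow> p = 3 \<and> n = 1 \<or> p = 5 \<and> n = 1 \<and> k \<le> 1"
    (is "?ineq \<longleftrightarrow> ?cases")
proof
  assume ?cases
  moreover have "k \<le> 1 \<Longrightarrow> X \<le> 8"
    unfolding X using power_increasing [of "2 * k + 1" 3 "2::nat"] by simp
  ultimately show ?ineq
    using P by auto
next
  assume ?ineq
  have "X \<ge> 2"
    unfolding X using power_increasing [of 1 "2 * k + 1" "2::nat"] by simp
  moreover have "p = 3 \<and> P \<ge> 9 \<or> p = 5 \<and> P \<ge> 25 \<or> p = 5 \<and> P = 5 \<and> X \<ge> 32 \<or> p \<ge> 7 \<and> P \<ge> p"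
    if "\<not> ?cases"
  proof -
    have "p \<ge> 3" "p \<noteq> 4" "p \<noteq> 6"
      using p prime_ge_2_nat [OF p(1)] by (auto intro: Suc_leI simp: le_less)
    then have "p = 3 \<or> p = 5 \<or> p \<ge> 7" by linarith
    moreover have "P \<ge> p"
      using P n \<open>p \<ge> 3\<close> by (simp add: self_le_power)
    moreover have "n = 1 \<or> P \<ge> p ^ 2"
      using P n \<open>p \<ge> 3\<close> by (cases "n = 1") (simp_all add: power_increasing)
    moreover have "k \<ge> 2 \<Longrightarrow> X \<ge> 32"
      unfolding X using power_increasing [of 5 "2 * k + 1" "2::nat"] by simp
    ultimately show ?thesis
      using that n P by auto
  qed
  ultimately show ?cases
    using threshold_inequality_fails [of X p P] \<open>?ineq\<close> by linarith
qed

theorem corollary3p10: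
  fixes p n k :: nat
  assumes "prime p" and "odd p" and "n \<ge> 1" and "k \<ge> 1"
  shows "psi' (Pstar p n k) > 19 / 43 \<longleftrightarrow>
           ((p = 3 \<and> n = 1 \<and> k \<ge> 1) \<or> (p = 5 \<and> n = 1 \<and> k \<le> 2))"
proof -
  obtain k' where k: "k = Suc k'" using assms(4) by (cases k) auto
  define P where "P = p ^ n"
  define X where "X = (2::nat) ^ (2 * k' + 1)"
  let ?G = "psi (Pstar p n k)" and ?C = "psi (cyclic_grp (order (Pstar p n k)))"
  have C: "3 * (p + 1) * ?C = (p * P * P + 1) * (4 * X + 1)"
    unfolding k P_def X_def by (rule psi_cyclic_order_Pstar [OF assms(1,2)])
  have G: "3 * ?G = 3 * P * X + (1 + (P - 1) * p) * (X + 1)"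
    unfolding k P_def X_def by (rule psi_Pstar_closed_form [OF assms(1,2)])
  have "?C > 0" using C by (intro gr0I) simp
  then have "psi' (Pstar p n k) > 19 / 43 \<longleftrightarrow> 19 * real ?C < 43 * real ?G"
    unfolding psi'_def by (simp add: divide_simps mult.commute)
  also have "\<dots> \<longleftrightarrow> 19 * ?C < 43 * ?G"
    by linarith
  also have "\<dots> \<longleftrightarrow> 3 * (p + 1) * (19 * ?C) < 3 * (p + 1) * (43 * ?G)"
    by simp
  also have "\<dots> \<longleftrightarrow> 19 * ((p * P * P + 1) * (4 * X + 1))
      < 43 * ((p + 1) * (3 * P * X + (1 + (P - 1) * p) * (X + 1)))"
    unfolding C [symmetric] G [symmetric] by (simp only: mult_ac)
  also have "\<dots> \<longleftrightarrow> p = 3 \<and> n = 1 \<or> p = 5 \<and> n = 1 \<and> k' \<le> 1"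
    by (rule threshold_inequality_iff [OF assms(1,2,3) P_def X_def])
  finally show ?thesis using k by auto
qed

end
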